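(* Let $\Sigma:\ \dot x=-(A-M)x+d$ be $\gamma$-robust for some $\gamma>0$, let $u=(A-M)^{-1}\mathbb{1}$ and $u_{\max}=\max_k u_k$. Let $i\neq j$ with $(M)_{ij}=0$, let $m_{ij}>0$, and set $\bar M=M+m_{ij}e_ie_j^{\mathrm T}$. Then the change $\Sigma\mapsto\bar\Sigma:\ \dot x=-(A-\bar M)x+d$ is scalable if and only if $-(A-M-m_{ij}e_ie_j^{\mathrm T})$ is Hurwitz and $$\frac{m_{ij}}{1-m_{ij}e_j^{\mathrm T}(A-M)^{-1}e_i}\,(A-M)^{-1}e_i\,u_j\ \le\ u_{\max}\mathbb{1}-u$$ (elementwise).
   Context: $A=\mathrm{diag}(a_1,\dots,a_N)$ with all $a_i>0$, $M\in\mathbb{R}^{N\times N}$ has zero diagonal and nonnegative off-diagonal entries; $e_i$ is the $i$th standard basis vector and $\mathbb{1}$ the all-ones vector. For $\gamma>0$, a system $\dot x=-(A-M)x+d$ is $\gamma$-robust if $-(A-M)$ is Hurwitz and for every bounded disturbance $d$, the solution with $x(0)=0$ satisfies $\max_{i}|x_i(t)|\le\gamma\max_i\sup_{s\ge0}|d_i(s)|$ for all $t\ge0$. A structural change $\Sigma\mapsto\bar\Sigma$ is called scalable if, for every $\gamma>0$ for which $\Sigma$ is $\gamma$-robust, $\bar\Sigma$ is $\gamma$-robust. *)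

theory Defs
  imports "HOL-Analysis.Analysis"
begin

definition hurwitz :: "real^'n^'n \<Rightarrow> bool" where
  "hurwitz B \<longleftrightarrow>
     (\<forall>z::complex. det (\<chi> i j. (if i = j then z else 0) - complex_of_real (B $ i $ j)) = 0
        \<longrightarrow> Re z < 0)"

definition dist_norm :: "(real \<Rightarrow> real^'n) \<Rightarrow> real" where
  "dist_norm d = (SUP s\<in>{0..}. Max (range (\<lambda>i. \<bar>d s $ i\<bar>)))"

definition bounded_disturbance :: "(real \<Rightarrow> real^'n) \<Rightarrow> bool" where
  "bounded_disturbance d \<longleftrightarrow> (\<exists>K. \<forall>s\<ge>0. \<forall>i. \<bar>d s $ i\<bar> \<le> K)"

definition is_solution :: "real^'n^'n \<Rightarrow> (real \<Rightarrow> real^'n) \<Rightarrow> (real \<Rightarrow> real^'n) \<Rightarrow> bool" where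
  "is_solution AM d x \<longleftrightarrow> x 0 = 0 \<and>
     (\<forall>t\<ge>0. (x has_vector_derivative (- (AM *v x t) + d t)) (at t within {0..}))"

definition robust :: "real^'n^'n \<Rightarrow> real \<Rightarrow> bool" where
  "robust AM \<gamma> \<longleftrightarrow> hurwitz (- AM) \<and>
     (\<forall>d x. bounded_disturbance d \<longrightarrow> is_solution AM d x \<longrightarrow>
        (\<forall>t\<ge>0. \<forall>i. \<bar>x t $ i\<bar> \<le> \<gamma> * dist_norm d))"

definition scalable :: "real^'n^'n \<Rightarrow> real^'n^'n \<Rightarrow> bool" where
  "scalable AM AM' \<longleftrightarrow> (\<forall>\<gamma>>0. robust AM \<gamma> \<longrightarrow> robust AM' \<gamma>)"

end

theory Submission
  imports Defs
begin

text \<open>Write \<open>K = A - M\<close>, a Z-matrix (nonpositive off-diagonal entries), and \<open>u = K\<^sup>-\<^sup>1 \<one>\<close>.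
  A Z-matrix system is \<open>\<gamma>\<close>-robust exactly when \<open>-K\<close> is Hurwitz and \<open>u \<le> \<gamma>\<close> componentwise.
  If \<open>u \<le> \<gamma>\<close>, the vectors \<open>(\<parallel>d\<parallel> + \<epsilon>) u \<plusminus> x(t)\<close> start in the open positive orthant and
  cannot leave it, since at a first exit time the component of minimal ratio to \<open>u\<close> would
  have positive derivative. Conversely, a slowly switched-on unit disturbance drives the state
  to \<open>u\<close>, which forces \<open>u \<le> \<gamma>\<close>. Hence a change \<open>K \<mapsto> K'\<close> is scalable iff \<open>-K'\<close> is Hurwitz and
  \<open>K'\<^sup>-\<^sup>1 \<one> \<le> max\<^sub>k u\<^sub>k\<close>; for the rank-one change at hand, \<open>K'\<^sup>-\<^sup>1 \<one>\<close> is given by the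
  Sherman--Morrison formula. That \<open>u > 0\<close> for Hurwitz Z-matrices is shown by continuation along the
  diagonal shifts \<open>K + \<tau> I\<close>, \<open>\<tau> \<ge> 0\<close>.\<close>

section \<open>Inverses and rank-one updates\<close>

lemma
  fixes K :: "'a::semiring_1^'n^'m"
  assumes "invertible K"
  shows matrix_inv_right: "K ** matrix_inv K = mat 1"
    and matrix_inv_left: "matrix_inv K ** K = mat 1"
  using someI_ex[OF assms[unfolded invertible_def]] by (auto simp: matrix_inv_def)

lemma matrix_inv_solution:
  fixes K :: "'a::semiring_1^'n^'m"
  assumes "invertible K" and "K *v x = b"
  shows "x = matrix_inv K *v b"
  by (metis assms matrix_inv_left matrix_vector_mul_assoc matrix_vector_mul_lid)

lemma matrix_vector_mult_component:
  "(K *v x) $ k = (\<Sum>l\<in>UNIV. K $ k $ l * x $ l)"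
  by (simp add: matrix_vector_mult_def)

lemma matrix_vector_mult_add_diag:
  fixes K :: "real^'n^'n"
  shows "(K + \<tau> *\<^sub>R mat 1) *v v = K *v v + \<tau> *\<^sub>R v"
  by (simp add: matrix_vector_mult_add_rdistrib scaleR_matrix_vector_assoc[symmetric])

lemma add_diag_add_diag:
  fixes K :: "real^'n^'n"
  shows "K + \<sigma> *\<^sub>R mat 1 + \<tau> *\<^sub>R mat 1 = K + (\<sigma> + \<tau>) *\<^sub>R mat 1"
  by (simp add: scaleR_left_distrib add.assoc)

lemma matrix_vector_mult_axis: "(K *v axis i c) $ k = K $ k $ i * (c::real)"
  by (simp add: matrix_vector_mult_def axis_def if_distrib cong: if_cong)

lemma matrix_vector_mult_sub_outer:
  fixes K :: "real^'n^'m"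
  shows "(K - (\<chi> k l. a $ k * c $ l)) *v z = K *v z - (c \<bullet> z) *\<^sub>R a"
  by (simp add: vec_eq_iff matrix_vector_mult_def inner_vec_def sum_subtractf
      sum_distrib_left algebra_simps)

lemma sherman_morrison:
  fixes K :: "real^'n^'n" and a b c :: "real^'n"
  assumes inv: "invertible K" and inv': "invertible (K - (\<chi> k l. a $ k * c $ l))"
  shows "c \<bullet> (matrix_inv K *v a) \<noteq> 1"
    and "matrix_inv (K - (\<chi> k l. a $ k * c $ l)) *v b = matrix_inv K *v b
      + ((c \<bullet> (matrix_inv K *v b)) / (1 - c \<bullet> (matrix_inv K *v a))) *\<^sub>R (matrix_inv K *v a)"
proof -
  let ?K' = "K - (\<chi> k l. a $ k * c $ l)"
  define p where "p = matrix_inv K *v a"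
  define q where "q = matrix_inv K *v b"
  have Kp: "K *v p = a" and Kq: "K *v q = b"
    by (simp_all add: p_def q_def matrix_vector_mul_assoc matrix_inv_right[OF inv])
  have ne: "c \<bullet> p \<noteq> 1"
  proof
    assume "c \<bullet> p = 1"
    then have "?K' *v p = 0" by (simp add: matrix_vector_mult_sub_outer Kp)
    then have "p = 0" using matrix_inv_solution[OF inv'] by fastforce
    with \<open>c \<bullet> p = 1\<close> show False by simp
  qed
  then show "c \<bullet> (matrix_inv K *v a) \<noteq> 1" by (simp add: p_def)
  define \<beta> where "\<beta> = (c \<bullet> q) / (1 - c \<bullet> p)"
  have "c \<bullet> q + \<beta> * (c \<bullet> p) = \<beta>"
    using ne by (simp add: \<beta>_def field_simps)
  have "?K' *v (q + \<beta> *\<^sub>R p) = K *v (q + \<beta> *\<^sub>R p) - (c \<bullet> (q + \<beta> *\<^sub>R p)) *\<^sub>R a"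
    by (rule matrix_vector_mult_sub_outer)
  also have "\<dots> = b + \<beta> *\<^sub>R a - (c \<bullet> q + \<beta> * (c \<bullet> p)) *\<^sub>R a"
    by (simp add: matrix_vector_right_distrib matrix_vector_mult_scaleR Kp Kq inner_add_right)
  also have "\<dots> = b" using \<open>c \<bullet> q + \<beta> * (c \<bullet> p) = \<beta>\<close> by simp
  finally have "?K' *v (q + \<beta> *\<^sub>R p) = b" .
  from matrix_inv_solution[OF inv' this]
  show "matrix_inv ?K' *v b = matrix_inv K *v b
      + ((c \<bullet> (matrix_inv K *v b)) / (1 - c \<bullet> (matrix_inv K *v a))) *\<^sub>R (matrix_inv K *v a)"
    by (simp add: p_def q_def \<beta>_def)
qed

lemma sherman_morrison_entry:
  fixes K :: "real^'n^'n" and i j :: 'n and m :: real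
  defines "K' \<equiv> K - (\<chi> k l. if k = i \<and> l = j then m else 0)"
  assumes "invertible K" and "invertible K'"
  shows "(matrix_inv K' *v b) $ k = (matrix_inv K *v b) $ k
    + m / (1 - m * matrix_inv K $ j $ i) * matrix_inv K $ k $ i * (matrix_inv K *v b) $ j"
proof -
  let ?P = "matrix_inv K"
  have "K' = K - (\<chi> k l. axis i m $ k * axis j 1 $ l)"
    by (simp add: K'_def vec_eq_iff axis_def)
  then have "matrix_inv K' *v b = ?P *v b + ((axis j 1 \<bullet> (?P *v b))
      / (1 - axis j 1 \<bullet> (?P *v axis i m))) *\<^sub>R (?P *v axis i m)"
    using sherman_morrison(2)[OF assms(2), of "axis i m" "axis j 1" b] assms(3) by simp
  moreover have "axis j 1 \<bullet> v = v $ j" for v :: "real^'n" by (simp add: inner_axis')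
  moreover have "(?P *v axis i m) $ l = ?P $ l $ i * m" for l by (rule matrix_vector_mult_axis)
  ultimately show ?thesis by (simp add: ac_simps)
qed

section \<open>Inverse positivity of Hurwitz Z-matrices\<close>

definition Z_matrix :: "real^'n^'n \<Rightarrow> bool" where
  "Z_matrix K \<longleftrightarrow> (\<forall>k l. k \<noteq> l \<longrightarrow> K $ k $ l \<le> 0)"

lemma Z_matrix_add_diag: "Z_matrix K \<Longrightarrow> Z_matrix (K + \<tau> *\<^sub>R mat 1)"
  by (simp add: Z_matrix_def mat_def)

text \<open>The ratio test behind all positivity arguments for Z-matrices: at a component
  where \<open>x / v\<close> is minimal, the off-diagonal terms of \<open>K x\<close> are bounded by those of \<open>K v\<close>.\<close>
lemma Z_matrix_min_ratio:
  fixes K :: "real^'n^'n"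
  assumes Z: "Z_matrix K" and v_pos: "\<forall>l. v $ l > 0"
  obtains k where "\<forall>l. x $ k / v $ k \<le> x $ l / v $ l"
    and "(K *v x) $ k \<le> x $ k / v $ k * (K *v v) $ k"
proof -
  define r where "r l = x $ l / v $ l" for l
  have "Min (range r) \<in> range r" by (simp add: Min_in)
  then obtain k where k: "r k = Min (range r)" by (metis imageE)
  have r_min: "r k \<le> r l" for l by (simp add: k)
  have x_eq: "x $ l = v $ l * r l" for l
    using v_pos[rule_format, of l] by (simp add: r_def)
  have "(K *v x) $ k = (\<Sum>l\<in>UNIV. K $ k $ l * (v $ l * r l))"
    by (simp add: matrix_vector_mult_component x_eq)
  also have "\<dots> \<le> (\<Sum>l\<in>UNIV. K $ k $ l * (v $ l * r k))"
  proof (rule sum_mono)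
    fix l
    show "K $ k $ l * (v $ l * r l) \<le> K $ k $ l * (v $ l * r k)"
    proof (cases "l = k")
      case False
      then have "K $ k $ l \<le> 0" using Z by (simp add: Z_matrix_def)
      moreover have "v $ l * r k \<le> v $ l * r l"
        using r_min v_pos by (simp add: less_imp_le)
      ultimately show ?thesis by (simp add: mult_left_mono_neg)
    qed simp
  qed
  also have "\<dots> = r k * (K *v v) $ k"
    by (simp add: matrix_vector_mult_component sum_distrib_left algebra_simps)
  finally have "(K *v x) $ k \<le> r k * (K *v v) $ k" .
  with r_min show thesis
    unfolding r_def by (intro that[of k]) auto
qed

lemma Z_matrix_mult_nonneg_imp_nonneg:
  fixes K :: "real^'n^'n"
  assumes Z: "Z_matrix K" and v_pos: "\<forall>l. v $ l > 0" and Kv_pos: "\<forall>l. (K *v v) $ l > 0"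
    and Kx_nonneg: "\<forall>l. (K *v x) $ l \<ge> 0"
  shows "x $ k \<ge> 0"
proof (rule ccontr)
  assume "\<not> x $ k \<ge> 0"
  then have "x $ k / v $ k < 0" using v_pos by (simp add: divide_neg_pos)
  obtain k' where min: "\<forall>l. x $ k' / v $ k' \<le> x $ l / v $ l"
    and k': "(K *v x) $ k' \<le> x $ k' / v $ k' * (K *v v) $ k'"
    using Z_matrix_min_ratio[OF Z v_pos] by blast
  have "x $ k' / v $ k' < 0"
    using min[rule_format, of k] \<open>x $ k / v $ k < 0\<close> by linarith
  then have "(K *v x) $ k' < 0"
    using k' Kv_pos by (meson mult_neg_pos order.strict_trans1)
  then show False using Kx_nonneg by (meson not_le)
qed

lemma Z_matrix_mult_eq_one_imp_pos:
  fixes K :: "real^'n^'n"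
  assumes Z: "Z_matrix K" and Kw: "K *v w = (\<chi> k. 1)" and w_nonneg: "\<forall>l. w $ l \<ge> 0"
  shows "w $ k > 0"
proof (rule ccontr)
  assume "\<not> w $ k > 0"
  then have "w $ k = 0" using w_nonneg[rule_format, of k] by linarith
  have "(K *v w) $ k = (\<Sum>l\<in>UNIV. K $ k $ l * w $ l)"
    by (rule matrix_vector_mult_component)
  also have "\<dots> \<le> 0"
  proof (rule sum_nonpos)
    fix l
    show "K $ k $ l * w $ l \<le> 0"
      using Z w_nonneg \<open>w $ k = 0\<close>
      by (cases "l = k") (auto simp: Z_matrix_def mult_nonpos_nonneg)
  qed
  finally show False using Kw by simp
qed

lemma det_of_real_matrix:
  fixes X :: "real^'n^'n"
  shows "det (\<chi> i j. complex_of_real (X $ i $ j)) = complex_of_real (det X)"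
  unfolding det_def by (simp add: of_real_sum of_real_mult of_real_prod)

lemma hurwitz_imp_invertible_add_diag:
  fixes K :: "real^'n^'n"
  assumes "hurwitz (- K)" and "\<tau> \<ge> 0"
  shows "invertible (K + \<tau> *\<^sub>R mat 1)"
proof -
  have char: "(\<chi> i j. (if i = j then complex_of_real \<tau> else 0) - complex_of_real ((- K) $ i $ j))
      = (\<chi> i j. complex_of_real ((K + \<tau> *\<^sub>R mat 1) $ i $ j))"
    by (auto simp: mat_def vec_eq_iff)
  have "det (K + \<tau> *\<^sub>R mat 1) \<noteq> 0"
  proof
    assume "det (K + \<tau> *\<^sub>R mat 1) = 0"
    then have "det (\<chi> i j. (if i = j then complex_of_real \<tau> else 0)
        - complex_of_real ((- K) $ i $ j)) = 0"
      by (simp only: char det_of_real_matrix of_real_0)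
    then have "Re (complex_of_real \<tau>) < 0"
      using assms(1) unfolding hurwitz_def by blast
    with assms(2) show False by simp
  qed
  then show ?thesis by (simp add: invertible_det_nz)
qed

definition semipositive :: "real^'n^'n \<Rightarrow> bool" where
  "semipositive K \<longleftrightarrow> (\<exists>v. (\<forall>k. v $ k > 0) \<and> (\<forall>k. (K *v v) $ k > 0))"

lemma semipositive_add_diag:
  assumes "semipositive K" and "\<tau> \<ge> 0"
  shows "semipositive (K + \<tau> *\<^sub>R mat 1)"
proof -
  obtain v where v: "\<forall>k. v $ k > 0" "\<forall>k. (K *v v) $ k > 0"
    using assms(1) by (auto simp: semipositive_def)
  have "((K + \<tau> *\<^sub>R mat 1) *v v) $ k > 0" for k
  proof -
    have "\<tau> * v $ k \<ge> 0" using v(1) assms(2) by (simp add: less_imp_le)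
    then show ?thesis using v(2) by (simp add: matrix_vector_mult_add_diag add_pos_nonneg)
  qed
  with v(1) show ?thesis by (auto simp: semipositive_def)
qed

lemma semipositive_add_large_diag: "\<exists>\<tau>\<ge>0. semipositive (K + \<tau> *\<^sub>R mat 1)"
proof -
  define \<tau> where "\<tau> = (\<Sum>k\<in>UNIV. \<Sum>l\<in>UNIV. \<bar>K $ k $ l\<bar>) + 1"
  have "((K + \<tau> *\<^sub>R mat 1) *v (\<chi> k. 1)) $ k > 0" for k
  proof -
    have "- (\<Sum>l\<in>UNIV. K $ k $ l) \<le> (\<Sum>l\<in>UNIV. \<bar>K $ k $ l\<bar>)"
      by (simp add: sum_negf[symmetric] sum_mono)
    also have "\<dots> \<le> (\<Sum>k\<in>UNIV. \<Sum>l\<in>UNIV. \<bar>K $ k $ l\<bar>)"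
      by (rule member_le_sum) (auto intro: sum_nonneg)
    also have "\<dots> < \<tau>" by (simp add: \<tau>_def)
    finally show ?thesis
      by (simp add: matrix_vector_mult_add_diag matrix_vector_mult_component)
  qed
  moreover have "\<tau> \<ge> 0" by (simp add: \<tau>_def sum_nonneg add_nonneg_nonneg)
  ultimately show ?thesis
    by (auto simp: semipositive_def intro!: exI[of _ \<tau>] exI[of _ "\<chi> k. 1"])
qed

lemma semipositive_sub_diag:
  assumes "semipositive K"
  obtains \<delta> where "\<delta> > 0" "semipositive (K - \<delta> *\<^sub>R mat 1)"
proof -
  obtain v where v: "\<forall>k. v $ k > 0" "\<forall>k. (K *v v) $ k > 0"
    using assms by (auto simp: semipositive_def)
  define q where "q k = (K *v v) $ k / v $ k" for k
  have "Min (range q) \<in> range q" by (simp add: Min_in)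
  then have q_pos: "Min (range q) > 0" using v by (auto simp: q_def)
  define \<delta> where "\<delta> = Min (range q) / 2"
  have "((K - \<delta> *\<^sub>R mat 1) *v v) $ k > 0" for k
  proof -
    have "Min (range q) \<le> q k" by simp
    then have "\<delta> < q k" using q_pos unfolding \<delta>_def by linarith
    then have "\<delta> * v $ k < (K *v v) $ k" using v by (simp add: q_def pos_less_divide_eq)
    then show ?thesis
      by (simp add: matrix_vector_mult_add_diag[of K "- \<delta>", simplified])
  qed
  with v(1) q_pos show thesis
    by (intro that[of \<delta>]) (auto simp: semipositive_def \<delta>_def)
qed

text \<open>Semipositivity is closed under \<open>\<delta> \<rightarrow> 0\<close> for invertible Z-matrices: for small \<open>\<delta>\<close> the
  vector \<open>K\<^sup>-\<^sup>1 \<one>\<close> is mapped by \<open>K + \<delta> I\<close> to a nonnegative vector, hence is itself positive.\<close>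
lemma semipositive_if_add_diag:
  fixes K :: "real^'n^'n"
  assumes Z: "Z_matrix K" and inv: "invertible K"
    and shifted: "\<And>\<delta>. \<delta> > 0 \<Longrightarrow> semipositive (K + \<delta> *\<^sub>R mat 1)"
  shows "semipositive K"
proof -
  define w where "w = matrix_inv K *v (\<chi> k. 1)"
  have Kw: "K *v w = (\<chi> k. 1)"
    by (simp add: w_def matrix_vector_mul_assoc matrix_inv_right[OF inv])
  define \<delta> where "\<delta> = 1 / ((\<Sum>k\<in>UNIV. \<bar>w $ k\<bar>) + 1)"
  have \<delta>_pos: "\<delta> > 0" by (simp add: \<delta>_def sum_nonneg add_nonneg_pos)
  obtain v where v: "\<forall>k. v $ k > 0" "\<forall>k. ((K + \<delta> *\<^sub>R mat 1) *v v) $ k > 0"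
    using shifted[OF \<delta>_pos] by (auto simp: semipositive_def)
  have "((K + \<delta> *\<^sub>R mat 1) *v w) $ k \<ge> 0" for k
  proof -
    have "\<bar>w $ k\<bar> \<le> (\<Sum>k\<in>UNIV. \<bar>w $ k\<bar>)" by (rule member_le_sum) auto
    then have "\<delta> * \<bar>w $ k\<bar> \<le> 1"
      by (simp add: \<delta>_def field_simps)
    then have "\<bar>\<delta> * w $ k\<bar> \<le> 1" using \<delta>_pos by (simp add: abs_mult)
    then show ?thesis by (simp add: matrix_vector_mult_add_diag Kw abs_le_iff)
  qed
  then have "\<forall>k. w $ k \<ge> 0"
    using Z_matrix_mult_nonneg_imp_nonneg[OF Z_matrix_add_diag[OF Z] v] by blast
  then have "\<forall>k. w $ k > 0"
    using Z_matrix_mult_eq_one_imp_pos[OF Z Kw] by blast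
  with Kw show ?thesis by (auto simp: semipositive_def)
qed

text \<open>Continuation along the diagonal shifts \<open>K + \<tau> I\<close>, \<open>\<tau> \<ge> 0\<close>, all of which are invertible:
  the set of \<open>\<tau>\<close> giving a semipositive matrix is nonempty, open and relatively closed.\<close>
lemma Z_matrix_hurwitz_imp_semipositive:
  fixes K :: "real^'n^'n"
  assumes Z: "Z_matrix K" and H: "hurwitz (- K)"
  shows "semipositive K"
proof -
  define T where "T = {\<tau>. \<tau> \<ge> 0 \<and> semipositive (K + \<tau> *\<^sub>R mat 1)}"
  have "T \<noteq> {}" using semipositive_add_large_diag by (auto simp: T_def)
  have "bdd_below T" by (rule bdd_belowI[of _ 0]) (auto simp: T_def)
  define s where "s = Inf T"
  have "s \<ge> 0" unfolding s_def using \<open>T \<noteq> {}\<close> by (intro cInf_greatest) (auto simp: T_def)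
  have "semipositive (K + s *\<^sub>R mat 1 + \<delta> *\<^sub>R mat 1)" if "\<delta> > 0" for \<delta>
  proof -
    have "Inf T < s + \<delta>" using \<open>\<delta> > 0\<close> by (simp add: s_def)
    then obtain t where "t \<in> T" "t < s + \<delta>"
      using cInf_less_iff[OF \<open>T \<noteq> {}\<close> \<open>bdd_below T\<close>] by blast
    then have "semipositive (K + t *\<^sub>R mat 1)" and "s + \<delta> - t \<ge> 0" by (auto simp: T_def)
    then have "semipositive (K + t *\<^sub>R mat 1 + (s + \<delta> - t) *\<^sub>R mat 1)"
      by (rule semipositive_add_diag)
    then show ?thesis by (simp add: add_diag_add_diag)
  qed
  then have s_semipos: "semipositive (K + s *\<^sub>R mat 1)"
    by (rule semipositive_if_add_diag[OF Z_matrix_add_diag[OF Z]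
          hurwitz_imp_invertible_add_diag[OF H \<open>s \<ge> 0\<close>]])
  show ?thesis
  proof (cases "s = 0")
    case True
    with s_semipos show ?thesis by simp
  next
    case False
    obtain \<delta> where "\<delta> > 0" and "semipositive (K + s *\<^sub>R mat 1 - \<delta> *\<^sub>R mat 1)"
      using semipositive_sub_diag[OF s_semipos] by blast
    then have "semipositive (K + (s - \<delta>) *\<^sub>R mat 1)"
      by (simp add: algebra_simps scaleR_diff_left)
    then have "semipositive (K + (s - \<delta>) *\<^sub>R mat 1 + (\<delta> - min \<delta> s) *\<^sub>R mat 1)"
      by (rule semipositive_add_diag) simp
    then have "s - min \<delta> s \<in> T"
      by (simp add: T_def add_diag_add_diag)
    then have "s \<le> s - min \<delta> s"
      unfolding s_def using \<open>bdd_below T\<close> by (rule cInf_lower)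
    then show ?thesis using \<open>\<delta> > 0\<close> \<open>s \<ge> 0\<close> False by linarith
  qed
qed

lemma Z_matrix_hurwitz_inverse_pos:
  fixes K :: "real^'n^'n"
  assumes Z: "Z_matrix K" and H: "hurwitz (- K)"
  shows "invertible K" and "(matrix_inv K *v (\<chi> k. 1)) $ k > 0"
proof -
  show inv: "invertible K"
    using hurwitz_imp_invertible_add_diag[OF H, of 0] by simp
  have Ku: "K *v (matrix_inv K *v (\<chi> k. 1)) = (\<chi> k. 1)"
    by (simp add: matrix_vector_mul_assoc matrix_inv_right[OF inv])
  obtain v where "\<forall>k. v $ k > 0" "\<forall>k. (K *v v) $ k > 0"
    using Z_matrix_hurwitz_imp_semipositive[OF Z H] by (auto simp: semipositive_def)
  then have "\<forall>k. (matrix_inv K *v (\<chi> k. 1)) $ k \<ge> 0"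
    using Z_matrix_mult_nonneg_imp_nonneg[OF Z] Ku by simp
  then show "(matrix_inv K *v (\<chi> k. 1)) $ k > 0"
    by (rule Z_matrix_mult_eq_one_imp_pos[OF Z Ku])
qed

section \<open>Robustness of Z-matrix systems\<close>

lemma has_vector_derivative_vec_nth:
  assumes "(y has_vector_derivative f) F"
  shows "((\<lambda>t. y t $ k) has_real_derivative f $ k) F"
proof -
  have "((\<lambda>t. y t $ k) has_derivative (\<lambda>h. (h *\<^sub>R f) $ k)) F"
    using bounded_linear.has_derivative[OF bounded_linear_vec_nth
        assms[unfolded has_vector_derivative_def]] by simp
  then show ?thesis by (simp add: has_field_derivative_def mult_commute_abs)
qed

lemma first_nonpositive_time:
  fixes y :: "real \<Rightarrow> real^'n"
  assumes cont: "continuous_on {0..} y" and init: "\<forall>k. y 0 $ k > 0"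
    and "t \<ge> 0" and "y t $ k \<le> 0"
  obtains s k' where "s > 0" and "y s $ k' \<le> 0"
    and "\<And>t k. 0 \<le> t \<Longrightarrow> t < s \<Longrightarrow> y t $ k > 0"
proof -
  define Z where "Z = (\<Union>k. {0..} \<inter> (\<lambda>t. y t $ k) -` {..0})"
  have "closed Z" unfolding Z_def
    by (intro closed_UN finite_UNIV ballI continuous_closed_preimage continuous_on_component cont)
      auto
  have "t \<in> Z" using assms(3,4) by (auto simp: Z_def)
  have "bdd_below Z" by (rule bdd_belowI[of _ 0]) (auto simp: Z_def)
  define s where "s = Inf Z"
  have "s \<in> Z"
    unfolding s_def using \<open>t \<in> Z\<close> \<open>bdd_below Z\<close> \<open>closed Z\<close> closed_contains_Inf by blast
  then obtain k' where "s \<ge> 0" "y s $ k' \<le> 0" by (auto simp: Z_def)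
  moreover have "s \<noteq> 0" using init \<open>y s $ k' \<le> 0\<close> by (metis not_le)
  moreover have "y t $ k > 0" if "0 \<le> t" "t < s" for t k
  proof (rule ccontr)
    assume "\<not> y t $ k > 0"
    then have "t \<in> Z" using that by (auto simp: Z_def not_less)
    then have "s \<le> t" unfolding s_def using \<open>bdd_below Z\<close> by (rule cInf_lower)
    with that show False by simp
  qed
  ultimately show thesis by (intro that[of s k']) auto
qed

lemma Z_matrix_positive_invariance:
  fixes K :: "real^'n^'n" and y f :: "real \<Rightarrow> real^'n"
  assumes Z: "Z_matrix K" and u_pos: "\<forall>k. u $ k > 0" and Ku_nonneg: "\<forall>k. (K *v u) $ k \<ge> 0"
    and deriv: "\<And>t. t \<ge> 0 \<Longrightarrow> (y has_vector_derivative f t) (at t within {0..})"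
    and drift: "\<And>t k. t \<ge> 0 \<Longrightarrow> (K *v y t) $ k + f t $ k > 0"
    and init: "\<forall>k. y 0 $ k > 0" and "t \<ge> 0"
  shows "y t $ k > 0"
proof (rule ccontr)
  assume "\<not> y t $ k > 0"
  have "continuous_on {0..} y"
    by (auto intro: has_vector_derivative_continuous[OF deriv]
        simp: continuous_on_eq_continuous_within)
  moreover have "y t $ k \<le> 0" using \<open>\<not> y t $ k > 0\<close> by simp
  ultimately obtain s k1 where "s > 0" "y s $ k1 \<le> 0"
    and before: "\<And>t k. 0 \<le> t \<Longrightarrow> t < s \<Longrightarrow> y t $ k > 0"
    using first_nonpositive_time init \<open>t \<ge> 0\<close> by blast
  obtain k where min: "\<forall>l. y s $ k / u $ k \<le> y s $ l / u $ l"
    and Ky: "(K *v y s) $ k \<le> y s $ k / u $ k * (K *v u) $ k"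
    using Z_matrix_min_ratio[OF Z u_pos] by blast
  have "y s $ k1 / u $ k1 \<le> 0"
    using \<open>y s $ k1 \<le> 0\<close> u_pos by (simp add: divide_nonpos_pos)
  then have ratio: "y s $ k / u $ k \<le> 0" using min by (meson order.trans)
  then have "y s $ k \<le> 0" using u_pos[rule_format, of k] by (simp add: divide_le_0_iff)
  have "(K *v y s) $ k \<le> 0"
    using Ky ratio Ku_nonneg by (meson mult_nonpos_nonneg order.trans)
  then have "f s $ k > 0" using drift[of s k] \<open>s > 0\<close> by simp
  moreover have "((\<lambda>t. y t $ k) has_real_derivative f s $ k) (at s within {0..})"
    using \<open>s > 0\<close> by (intro has_vector_derivative_vec_nth deriv) simp
  ultimately obtain d where "d > 0"
    and decr: "\<And>h. h > 0 \<Longrightarrow> s - h \<in> {0..} \<Longrightarrow> h < d \<Longrightarrow> y (s - h) $ k < y s $ k"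
    using has_real_derivative_pos_inc_left by blast
  define h where "h = min d s / 2"
  have "h > 0" "h < d" "s - h \<ge> 0" using \<open>d > 0\<close> \<open>s > 0\<close> by (auto simp: h_def)
  then have "y (s - h) $ k < y s $ k" using decr by simp
  moreover have "y (s - h) $ k > 0" using before \<open>h > 0\<close> \<open>s - h \<ge> 0\<close> by simp
  ultimately show False using \<open>y s $ k \<le> 0\<close> by simp
qed

lemma bounded_disturbance_le_dist_norm:
  assumes "bounded_disturbance d" and "s \<ge> 0"
  shows "\<bar>d s $ k\<bar> \<le> dist_norm d"
proof -
  obtain C where C: "\<forall>s\<ge>0. \<forall>i. \<bar>d s $ i\<bar> \<le> C"
    using assms(1) unfolding bounded_disturbance_def by blast
  have "bdd_above ((\<lambda>s. Max (range (\<lambda>i. \<bar>d s $ i\<bar>))) ` {0..})"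
    by (rule bdd_aboveI[of _ C]) (use C in auto)
  then have "Max (range (\<lambda>i. \<bar>d s $ i\<bar>)) \<le> dist_norm d"
    unfolding dist_norm_def using assms(2) by (intro cSUP_upper) auto
  moreover have "\<bar>d s $ k\<bar> \<le> Max (range (\<lambda>i. \<bar>d s $ i\<bar>))" by simp
  ultimately show ?thesis by linarith
qed

lemma robust_if_gain_le:
  fixes K :: "real^'n^'n"
  assumes Z: "Z_matrix K" and H: "hurwitz (- K)" and u_pos: "\<forall>k. u $ k > 0"
    and Ku: "K *v u = (\<chi> k. 1)" and u_le: "\<forall>k. u $ k \<le> \<gamma>"
  shows "robust K \<gamma>"
  unfolding robust_def
proof (intro conjI H allI impI)
  fix d x t i
  assume bd: "bounded_disturbance d" and sol: "is_solution K d x" and "t \<ge> (0::real)"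
  define D where "D = dist_norm d"
  have d_le: "\<bar>d s $ k\<bar> \<le> D" if "s \<ge> 0" for s k
    using bounded_disturbance_le_dist_norm[OF bd that] by (simp add: D_def)
  then have "D \<ge> 0" by (meson abs_ge_zero order.trans order_refl)
  have x0: "x 0 = 0"
    and deriv: "\<And>t. t \<ge> 0 \<Longrightarrow> (x has_vector_derivative - (K *v x t) + d t) (at t within {0..})"
    using sol unfolding is_solution_def by auto
  have bound: "((D + \<epsilon>) *\<^sub>R u + \<sigma> *\<^sub>R x t) $ i > 0" if "\<epsilon> > 0" "\<bar>\<sigma>\<bar> = 1" for \<epsilon> \<sigma>
  proof (rule Z_matrix_positive_invariance[OF Z u_pos _ _ _ _ \<open>t \<ge> 0\<close>])
    show "\<forall>k. (K *v u) $ k \<ge> 0" by (simp add: Ku)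
    show "((\<lambda>t. (D + \<epsilon>) *\<^sub>R u + \<sigma> *\<^sub>R x t) has_vector_derivative
        \<sigma> *\<^sub>R (- (K *v x t) + d t)) (at t within {0..})" if "t \<ge> 0" for t
      using deriv[OF that] by (auto intro!: derivative_eq_intros)
    show "(K *v ((D + \<epsilon>) *\<^sub>R u + \<sigma> *\<^sub>R x t)) $ k + (\<sigma> *\<^sub>R (- (K *v x t) + d t)) $ k > 0"
      if "t \<ge> 0" for t k
    proof -
      have "\<bar>\<sigma> * d t $ k\<bar> \<le> D" using d_le[OF that] \<open>\<bar>\<sigma>\<bar> = 1\<close> by (simp add: abs_mult)
      then show ?thesis using \<open>\<epsilon> > 0\<close>
        by (simp add: matrix_vector_mult_scaleR matrix_vector_right_distrib
            scaleR_matrix_vector_assoc[symmetric] Ku algebra_simps)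
    qed
    show "\<forall>k. ((D + \<epsilon>) *\<^sub>R u + \<sigma> *\<^sub>R x 0) $ k > 0"
      using x0 u_pos \<open>D \<ge> 0\<close> \<open>\<epsilon> > 0\<close> by simp
  qed
  have "\<bar>x t $ i\<bar> \<le> D * u $ i + \<epsilon>" if "\<epsilon> > 0" for \<epsilon>
  proof -
    have "\<epsilon> / u $ i > 0" using that u_pos by simp
    from bound[OF this, of 1] bound[OF this, of "-1"]
    have "\<bar>x t $ i\<bar> \<le> (D + \<epsilon> / u $ i) * u $ i" by auto
    also have "\<dots> = D * u $ i + \<epsilon>" using u_pos[rule_format, of i] by (simp add: field_simps)
    finally show ?thesis .
  qed
  then have "\<bar>x t $ i\<bar> \<le> D * u $ i" by (rule field_le_epsilon)
  also have "\<dots> \<le> \<gamma> * D" using u_le \<open>D \<ge> 0\<close> by (simp add: mult.commute mult_left_mono)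
  finally show "\<bar>x t $ i\<bar> \<le> \<gamma> * dist_norm d" by (simp add: D_def)
qed

text \<open>The state \<open>x(t) = (1 - e\<^sup>-\<^sup>\<epsilon>\<^sup>t) u\<close> is the response to the slowly switched-on unit disturbance
  \<open>d(t) = \<epsilon> e\<^sup>-\<^sup>\<epsilon>\<^sup>t u + (1 - e\<^sup>-\<^sup>\<epsilon>\<^sup>t) \<one>\<close>, whose norm is at most \<open>1 + \<epsilon> \<Sum>\<^sub>l |u\<^sub>l|\<close>.\<close>
lemma robust_ramp_response:
  fixes K :: "real^'n^'n"
  assumes R: "robust K \<gamma>" and "\<gamma> \<ge> 0" and Ku: "K *v u = (\<chi> k. 1)"
    and "\<epsilon> > 0" and "t \<ge> 0"
  shows "(1 - exp (- \<epsilon> * t)) * \<bar>u $ k\<bar> \<le> \<gamma> * (1 + \<epsilon> * (\<Sum>l\<in>UNIV. \<bar>u $ l\<bar>))"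
proof -
  define c where "c = (\<Sum>l\<in>UNIV. \<bar>u $ l\<bar>)"
  define x where "x t = (1 - exp (- \<epsilon> * t)) *\<^sub>R u" for t
  define d where "d t = (\<epsilon> * exp (- \<epsilon> * t)) *\<^sub>R u + (1 - exp (- \<epsilon> * t)) *\<^sub>R (\<chi> k. (1::real))"
    for t
  have d_le: "\<bar>d s $ l\<bar> \<le> 1 + \<epsilon> * c" if "s \<ge> 0" for s l
  proof -
    have e: "exp (- \<epsilon> * s) \<le> 1" "exp (- \<epsilon> * s) > 0" using \<open>\<epsilon> > 0\<close> that by auto
    have "\<bar>u $ l\<bar> \<le> c" unfolding c_def by (rule member_le_sum) auto
    then have "\<epsilon> * exp (- \<epsilon> * s) * \<bar>u $ l\<bar> \<le> \<epsilon> * 1 * c"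
      using \<open>\<epsilon> > 0\<close> e by (intro mult_mono) auto
    moreover have "\<bar>d s $ l\<bar> \<le> \<epsilon> * exp (- \<epsilon> * s) * \<bar>u $ l\<bar> + (1 - exp (- \<epsilon> * s))"
      using \<open>\<epsilon> > 0\<close> e by (simp add: d_def abs_mult abs_triangle_ineq[THEN order_trans])
    ultimately show ?thesis using e by linarith
  qed
  have "bounded_disturbance d"
    unfolding bounded_disturbance_def using d_le by blast
  moreover have "is_solution K d x"
    unfolding is_solution_def
  proof (intro conjI allI impI)
    fix t :: real
    have "(x has_vector_derivative (\<epsilon> * exp (- \<epsilon> * t)) *\<^sub>R u) (at t within {0..})"
      unfolding x_def[abs_def] by (auto intro!: derivative_eq_intros)
    moreover have "(\<epsilon> * exp (- \<epsilon> * t)) *\<^sub>R u = - (K *v x t) + d t"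
      by (simp add: x_def d_def matrix_vector_mult_scaleR Ku)
    ultimately show "(x has_vector_derivative - (K *v x t) + d t) (at t within {0..})"
      by simp
  qed (simp add: x_def)
  ultimately have "\<bar>x t $ k\<bar> \<le> \<gamma> * dist_norm d"
    using R \<open>t \<ge> 0\<close> unfolding robust_def by blast
  also have "\<dots> \<le> \<gamma> * (1 + \<epsilon> * c)"
    unfolding dist_norm_def using d_le \<open>\<gamma> \<ge> 0\<close>
    by (intro mult_left_mono cSUP_least) (auto simp: Max_le_iff)
  finally show ?thesis
    using \<open>\<epsilon> > 0\<close> \<open>t \<ge> 0\<close> by (simp add: x_def abs_mult c_def)
qed

lemma robust_imp_gain_le:
  fixes K :: "real^'n^'n"
  assumes R: "robust K \<gamma>" and "\<gamma> \<ge> 0" and Ku: "K *v u = (\<chi> k. 1)"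
  shows "\<bar>u $ k\<bar> \<le> \<gamma>"
proof -
  define c where "c = (\<Sum>l\<in>UNIV. \<bar>u $ l\<bar>)"
  have "\<bar>u $ k\<bar> \<le> \<gamma> * (1 + \<epsilon> * c)" if "\<epsilon> > 0" for \<epsilon>
  proof (rule tendsto_le[OF trivial_limit_at_top_linorder])
    have "((\<lambda>t. exp (- \<epsilon> * t)) \<longlongrightarrow> 0) at_top"
      using that by (intro filterlim_compose[OF exp_at_bot] filterlim_tendsto_neg_mult_at_bot
          tendsto_const filterlim_ident) auto
    then have "((\<lambda>t. (1 - exp (- \<epsilon> * t)) * \<bar>u $ k\<bar>) \<longlongrightarrow> (1 - 0) * \<bar>u $ k\<bar>) at_top"
      by (intro tendsto_intros)
    then show "((\<lambda>t. (1 - exp (- \<epsilon> * t)) * \<bar>u $ k\<bar>) \<longlongrightarrow> \<bar>u $ k\<bar>) at_top" by simp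
    show "\<forall>\<^sub>F t in at_top. (1 - exp (- \<epsilon> * t)) * \<bar>u $ k\<bar> \<le> \<gamma> * (1 + \<epsilon> * c)"
      using eventually_ge_at_top[of 0]
      by eventually_elim (use robust_ramp_response[OF R \<open>\<gamma> \<ge> 0\<close> Ku that] in \<open>simp add: c_def\<close>)
  qed simp
  then show ?thesis
  proof (intro tendsto_le[OF trivial_limit_at_right_real, of "\<lambda>\<epsilon>. \<gamma> * (1 + \<epsilon> * c)"])
    have "((\<lambda>\<epsilon>. \<gamma> * (1 + \<epsilon> * c)) \<longlongrightarrow> \<gamma> * (1 + 0 * c)) (at_right 0)"
      by (intro tendsto_intros)
    then show "((\<lambda>\<epsilon>. \<gamma> * (1 + \<epsilon> * c)) \<longlongrightarrow> \<gamma>) (at_right 0)" by simp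
  qed (auto intro: eventually_mono[OF eventually_at_right_less])
qed

lemma robust_iff_gain_le:
  fixes K :: "real^'n^'n"
  assumes Z: "Z_matrix K" and "\<gamma> \<ge> 0"
  shows "robust K \<gamma> \<longleftrightarrow> hurwitz (- K) \<and> (\<forall>k. (matrix_inv K *v (\<chi> k. 1)) $ k \<le> \<gamma>)"
proof (cases "hurwitz (- K)")
  case True
  have Ku: "K *v (matrix_inv K *v (\<chi> k. 1)) = (\<chi> k. 1)"
    by (simp add: matrix_vector_mul_assoc
        matrix_inv_right[OF Z_matrix_hurwitz_inverse_pos(1)[OF Z True]])
  show ?thesis
  proof
    assume "robust K \<gamma>"
    then show "hurwitz (- K) \<and> (\<forall>k. (matrix_inv K *v (\<chi> k. 1)) $ k \<le> \<gamma>)"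
      using True robust_imp_gain_le[OF _ \<open>\<gamma> \<ge> 0\<close> Ku] by (auto simp: abs_le_iff)
  next
    assume "hurwitz (- K) \<and> (\<forall>k. (matrix_inv K *v (\<chi> k. 1)) $ k \<le> \<gamma>)"
    then show "robust K \<gamma>"
      using robust_if_gain_le[OF Z True allI[OF Z_matrix_hurwitz_inverse_pos(2)[OF Z True]] Ku]
      by blast
  qed
qed (simp add: robust_def)

lemma scalable_iff_gain_le_max:
  fixes K K' :: "real^'n^'n"
  assumes Z: "Z_matrix K" and Z': "Z_matrix K'" and H: "hurwitz (- K)"
  shows "scalable K K' \<longleftrightarrow> hurwitz (- K') \<and>
    (\<forall>k. (matrix_inv K' *v (\<chi> k. 1)) $ k \<le> Max (range (\<lambda>k. (matrix_inv K *v (\<chi> k. 1)) $ k)))"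
    (is "_ \<longleftrightarrow> ?H' \<and> (\<forall>k. ?u' k \<le> ?umax)")
proof -
  have "?umax \<in> range (\<lambda>k. (matrix_inv K *v (\<chi> k. 1)) $ k)" by (simp add: Max_in)
  then obtain k0 where "?umax = (matrix_inv K *v (\<chi> k. 1)) $ k0" by (rule rangeE)
  then have "?umax > 0" using Z_matrix_hurwitz_inverse_pos(2)[OF Z H] by simp
  have robust_K: "robust K \<gamma> \<longleftrightarrow> ?umax \<le> \<gamma>" if "\<gamma> \<ge> 0" for \<gamma>
    using robust_iff_gain_le[OF Z that] H by simp
  show ?thesis
  proof
    assume "scalable K K'"
    then have "robust K' ?umax"
      using robust_K \<open>?umax > 0\<close> unfolding scalable_def by simp
    then show "?H' \<and> (\<forall>k. ?u' k \<le> ?umax)"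
      using robust_iff_gain_le[OF Z'] \<open>?umax > 0\<close> by simp
  next
    assume gain': "?H' \<and> (\<forall>k. ?u' k \<le> ?umax)"
    show "scalable K K'"
      unfolding scalable_def
    proof (intro allI impI)
      fix \<gamma> :: real
      assume "\<gamma> > 0" and "robust K \<gamma>"
      then have "?umax \<le> \<gamma>" using robust_K by simp
      with gain' show "robust K' \<gamma>"
        using robust_iff_gain_le[OF Z'] \<open>\<gamma> > 0\<close> by (auto intro: order_trans)
    qed
  qed
qed

theorem mainTheorem7:
  fixes A M :: "real^'n^'n" and \<gamma> m :: real and i j :: 'n
  assumes A_diag: "\<forall>k l. k \<noteq> l \<longrightarrow> A $ k $ l = 0"
    and A_pos: "\<forall>k. A $ k $ k > 0"
    and M_diag: "\<forall>k. M $ k $ k = 0"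
    and M_nonneg: "\<forall>k l. M $ k $ l \<ge> 0"
    and gamma_pos: "\<gamma> > 0"
    and rob: "robust (A - M) \<gamma>"
    and ij: "i \<noteq> j"
    and Mij: "M $ i $ j = 0"
    and m_pos: "m > 0"
  shows "let Minv = matrix_inv (A - M);
             u = Minv *v (\<chi> k. 1);
             umax = Max (range (\<lambda>k. u $ k));
             Mbar = (\<chi> k l. M $ k $ l + (if k = i \<and> l = j then m else 0))
         in scalable (A - M) (A - Mbar) \<longleftrightarrow>
            hurwitz (- (A - Mbar)) \<and>
            (\<forall>k. m / (1 - m * Minv $ j $ i) * Minv $ k $ i * u $ j \<le> umax - u $ k)"
proof -
  define Mbar where "Mbar = (\<chi> k l. M $ k $ l + (if k = i \<and> l = j then m else 0))"
  \<comment> \<open>Only the Z-matrix structure of \<open>A - M\<close> and \<open>A - Mbar\<close> matters.\<close>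
  have Z: "Z_matrix (A - M)"
    using A_diag M_nonneg by (simp add: Z_matrix_def)
  have "Mbar $ k $ l \<ge> 0" for k l
    using M_nonneg[rule_format, of k l] m_pos by (simp add: Mbar_def)
  then have Z': "Z_matrix (A - Mbar)"
    using A_diag by (simp add: Z_matrix_def)
  have H: "hurwitz (- (A - M))" using rob by (simp add: robust_def)
  have entry: "A - Mbar = (A - M) - (\<chi> k l. if k = i \<and> l = j then m else 0)"
    by (simp add: Mbar_def vec_eq_iff)
  have gain': "(matrix_inv (A - Mbar) *v (\<chi> k. 1)) $ k
      = (matrix_inv (A - M) *v (\<chi> k. 1)) $ k + m / (1 - m * matrix_inv (A - M) $ j $ i)
        * matrix_inv (A - M) $ k $ i * (matrix_inv (A - M) *v (\<chi> k. 1)) $ j"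
    if "hurwitz (- (A - Mbar))" for k
    using Z_matrix_hurwitz_inverse_pos(1)[OF Z' that] unfolding entry
    by (rule sherman_morrison_entry[OF Z_matrix_hurwitz_inverse_pos(1)[OF Z H]])
  show ?thesis
    unfolding Let_def Mbar_def[symmetric]
    using scalable_iff_gain_le_max[OF Z Z' H] gain' by (auto simp: algebra_simps)
qed

end
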